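(* Let $\Delta>0$, $L>0$ and $\epsilon\in[0,L)$ (in the paper's normalization $L=1$, this is $\epsilon\in[0,1)$). Let $\mathcal{A}$ be any (deterministic or randomized) algorithm which, at each iteration $t$, chooses a query point $x_t$ as a (possibly random) function of the previously queried points and the oracle answers received so far, and receives as answer the function value $f(x_t)$ and an element of the generalized gradient $\partial f(x_t)$. Then for every finite $T$ there exists $f\in\mathcal{F}(\Delta,L)$ such that, when $\mathcal{A}$ is run on $f$, the probability that the sequence $\{x_t\}_{t=1}^T$ contains an $\epsilon$-stationary point of $f$ is at most $\tfrac12$.
   Context: Clarke generalized gradient: $f^\circ(x;d):=\limsup_{y\to x,\,t\downarrow0}\frac{f(y+td)-f(y)}{t}$ and $\partial f(x):=\{g:\langle g,d\rangle\le f^\circ(x;d)\ \forall d\}$. A point $x$ is $\epsilon$-stationary if $\min\{\|g\|:g\in\partial f(x)\}\le\epsilon$. $f$ is directionally differentiable (Hadamard) if for all $x,d$ and all $\varphi:\mathbb{R}_+\to\mathbb{R}^n$ with $\varphi(0)=x$, $\lim_{t\to0^+}(\varphi(t)-\varphi(0))/t=d$, the limit $f'(x;d)=\lim_{t\to0^+}(f(\varphi(t))-f(x))/t$ exists. Given a fixed initial point $x_0$, $\mathcal{F}(\Delta,L)$ is the set of $f:\mathbb{R}^n\to\mathbb{R}$ that are $L$-Lipschitz, directionally differentiable at every point, and satisfy $f(x_0)-\inf_x f(x)\le\Delta$. *)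

theory Defs
  imports "HOL-Probability.Probability"
begin

definition clarke_dd :: "('a::euclidean_space \<Rightarrow> real) \<Rightarrow> 'a \<Rightarrow> 'a \<Rightarrow> ereal" where
  "clarke_dd f x d =
     Limsup (at (x, 0) within (UNIV \<times> {0<..}))
            (\<lambda>(y, t). ereal ((f (y + t *\<^sub>R d) - f y) / t))"

definition clarke_subdiff :: "('a::euclidean_space \<Rightarrow> real) \<Rightarrow> 'a \<Rightarrow> 'a set" where
  "clarke_subdiff f x = {g. \<forall>d. ereal (g \<bullet> d) \<le> clarke_dd f x d}"

definition eps_stationary :: "('a::euclidean_space \<Rightarrow> real) \<Rightarrow> real \<Rightarrow> 'a \<Rightarrow> bool" where
  "eps_stationary f eps x \<longleftrightarrow> (\<exists>g \<in> clarke_subdiff f x. norm g \<le> eps)"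

definition hadamard_dir_diff :: "('a::euclidean_space \<Rightarrow> real) \<Rightarrow> bool" where
  "hadamard_dir_diff f \<longleftrightarrow>
     (\<forall>x d (\<phi>::real \<Rightarrow> 'a). \<phi> 0 = x \<longrightarrow>
        ((\<lambda>t. (1 / t) *\<^sub>R (\<phi> t - \<phi> 0)) \<longlongrightarrow> d) (at_right 0) \<longrightarrow>
        (\<exists>l. ((\<lambda>t. (f (\<phi> t) - f x) / t) \<longlongrightarrow> l) (at_right 0)))"

text \<open>The function class F(Delta, L) relative to initial point x0
  (f x0 - inf f \<le> Delta, written pointwise).\<close>
definition fclass :: "'a::euclidean_space \<Rightarrow> real \<Rightarrow> real \<Rightarrow> ('a \<Rightarrow> real) set" where
  "fclass x0 \<Delta> L = {f. L-lipschitz_on UNIV f \<and> hadamard_dir_diff f \<and>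
                        (\<forall>x. f x0 - f x \<le> \<Delta>)}"

text \<open>Running an algorithm: alg t h gives the query at iteration t (0-based) from the
  history h = [(x_s, f x_s, g x_s). s < t]; the oracle returns f x and g x.\<close>
fun history :: "(nat \<Rightarrow> ('a \<times> real \<times> 'a) list \<Rightarrow> 'a) \<Rightarrow> ('a \<Rightarrow> real) \<Rightarrow> ('a \<Rightarrow> 'a)
                 \<Rightarrow> nat \<Rightarrow> ('a \<times> real \<times> 'a) list" where
  "history alg f g 0 = []"
| "history alg f g (Suc t) =
     (let h = history alg f g t; x = alg t h in h @ [(x, f x, g x)])"

definition query :: "(nat \<Rightarrow> ('a \<times> real \<times> 'a) list \<Rightarrow> 'a) \<Rightarrow> ('a \<Rightarrow> real) \<Rightarrow> ('a \<Rightarrow> 'a)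
                 \<Rightarrow> nat \<Rightarrow> 'a" where
  "query alg f g t = alg t (history alg f g t)"

end

(*
  The stationary points are hidden in a thin notch. Fix a unit vector e, p = e \<bullet> x0 and
  \<epsilon> < m < L. For r > 0 the ridge function x \<mapsto> \<phi>\<^sub>r (e \<bullet> x - p) with
  \<phi>\<^sub>r s = max (L s) (min (-m s) (m r - L (s + r))) is a max-min of affine functions, hence
  L-Lipschitz and Hadamard directionally differentiable, and f x0 - inf f = (L - m) r / 2.
  Its slope is L for s \<ge> 0 and -m for s < -r, so its \<epsilon>-stationary points all lie in the notch
  -r \<le> s < 0; outside the notch it agrees, together with its generalized gradient, with one fixed
  V-shaped function. An algorithm therefore runs identically on \<phi>\<^sub>r and on the V as long as
  its queries avoid the notch. Taking r\<^sub>n \<rightarrow> 0, every single run on the V meets only finitely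
  many notches within T steps, so the probability of finding an \<epsilon>-stationary point of the
  n-th instance tends to 0, and some instance keeps it below 1/2.
*)

theory Submission
  imports Defs
begin

lemma clarke_dd_le_of_affine_on_open:
  fixes f :: "'a::euclidean_space \<Rightarrow> real"
  assumes "open S" "x \<in> S" and affine: "\<And>y. y \<in> S \<Longrightarrow> f y = a \<bullet> y + b"
  shows "clarke_dd f x d \<le> ereal (a \<bullet> d)"
proof -
  let ?F = "at (x, 0::real) within UNIV \<times> {0<..}"
  have fst_lim: "(fst \<longlongrightarrow> x) ?F" and snd_lim: "(snd \<longlongrightarrow> 0) ?F"
    using tendsto_fst[OF tendsto_ident_at] tendsto_snd[OF tendsto_ident_at] by fastforce+
  have "((\<lambda>z. fst z + snd z *\<^sub>R d) \<longlongrightarrow> x + 0 *\<^sub>R d) ?F"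
    by (intro tendsto_intros fst_lim snd_lim)
  then have shifted: "\<forall>\<^sub>F z in ?F. fst z + snd z *\<^sub>R d \<in> S"
    using assms(1,2) by (intro topological_tendstoD) auto
  have base: "\<forall>\<^sub>F z in ?F. fst z \<in> S"
    using assms(1,2) fst_lim by (intro topological_tendstoD) auto
  have pos: "\<forall>\<^sub>F z in ?F. 0 < snd z"
    unfolding eventually_at_filter by (rule always_eventually) auto
  have "\<forall>\<^sub>F z in ?F. (case z of (y, t) \<Rightarrow> ereal ((f (y + t *\<^sub>R d) - f y) / t)) \<le> ereal (a \<bullet> d)"
    using shifted base pos by eventually_elim (auto simp: affine inner_add_right)
  then show ?thesis
    unfolding clarke_dd_def by (rule Limsup_bounded)
qed

lemma clarke_dd_ge_of_affine_on_open:
  fixes f :: "'a::euclidean_space \<Rightarrow> real"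
  assumes "open S" "x \<in> closure S" and affine: "\<And>y. y \<in> S \<Longrightarrow> f y = a \<bullet> y + b"
  shows "ereal (a \<bullet> d) \<le> clarke_dd f x d"
  unfolding clarke_dd_def
proof (rule Limsup_greatest)
  fix P :: "'a \<times> real \<Rightarrow> bool"
  assume "eventually P (at (x, 0) within UNIV \<times> {0<..})"
  then obtain \<delta> where "\<delta> > 0"
    and P: "\<And>z. z \<in> UNIV \<times> {0<..} \<Longrightarrow> z \<noteq> (x, 0) \<Longrightarrow> dist z (x, 0) < \<delta> \<Longrightarrow> P z"
    unfolding eventually_at by blast
  obtain y where "y \<in> S" and y_near: "dist y x < \<delta> / 2"
    using assms(2) \<open>\<delta> > 0\<close> unfolding closure_approachable by (meson half_gt_zero)
  have "((\<lambda>t. y + t *\<^sub>R d) \<longlongrightarrow> y + 0 *\<^sub>R d) (at_right 0)"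
    by (intro tendsto_intros)
  then have "\<forall>\<^sub>F t in at_right 0. y + t *\<^sub>R d \<in> S"
    using \<open>open S\<close> \<open>y \<in> S\<close> by (intro topological_tendstoD) auto
  moreover have "\<forall>\<^sub>F t in at_right 0. t \<in> {0<..<\<delta> / 2}"
    using \<open>\<delta> > 0\<close> by (intro eventually_at_right_real) simp
  ultimately obtain t where t: "y + t *\<^sub>R d \<in> S" "0 < t" "t < \<delta> / 2"
    using eventually_happens[OF eventually_conj] trivial_limit_at_right_real by fastforce
  have "dist (y, t) (x, 0) \<le> dist y x + dist t 0"
    using norm_Pair_le[of "y - x" t] by (simp add: dist_norm)
  then have "P (y, t)"
    using t y_near by (intro P) (auto simp: dist_real_def)
  moreover have "(f (y + t *\<^sub>R d) - f y) / t = a \<bullet> d"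
    using t \<open>y \<in> S\<close> by (simp add: affine inner_add_right)
  ultimately show "ereal (a \<bullet> d) \<le>
      (SUP z\<in>Collect P. case z of (y, t) \<Rightarrow> ereal ((f (y + t *\<^sub>R d) - f y) / t))"
    by (intro SUP_upper2[of "(y, t)"]) auto
qed

lemma clarke_subdiff_mem_of_affine_on_open:
  fixes f :: "'a::euclidean_space \<Rightarrow> real"
  assumes "open S" "x \<in> closure S" "\<And>y. y \<in> S \<Longrightarrow> f y = a \<bullet> y + b"
  shows "a \<in> clarke_subdiff f x"
  using clarke_dd_ge_of_affine_on_open[OF assms] unfolding clarke_subdiff_def by auto

lemma clarke_subdiff_eq_of_affine_on_open:
  fixes f :: "'a::euclidean_space \<Rightarrow> real"
  assumes "open S" "x \<in> S" and affine: "\<And>y. y \<in> S \<Longrightarrow> f y = a \<bullet> y + b"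
  shows "clarke_subdiff f x = {a}"
proof
  show "{a} \<subseteq> clarke_subdiff f x"
    using clarke_subdiff_mem_of_affine_on_open[OF \<open>open S\<close> _ affine] assms(2) closure_subset
    by blast
  show "clarke_subdiff f x \<subseteq> {a}"
  proof
    fix g assume "g \<in> clarke_subdiff f x"
    then have "ereal (g \<bullet> (g - a)) \<le> ereal (a \<bullet> (g - a))"
      unfolding clarke_subdiff_def
      using clarke_dd_le_of_affine_on_open[OF assms, of "g - a"] order_trans by blast
    then have "(g - a) \<bullet> (g - a) \<le> 0"
      by (simp add: inner_diff_left)
    then show "g \<in> {a}"
      by (metis inner_gt_zero_iff not_le right_minus_eq singletonI)
  qed
qed

definition one_sided_dir_diff :: "('a::real_normed_vector \<Rightarrow> real) \<Rightarrow> bool" where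
  "one_sided_dir_diff f \<longleftrightarrow>
     (\<forall>x d. \<exists>l. ((\<lambda>t. (f (x + t *\<^sub>R d) - f x) / t) \<longlongrightarrow> l) (at_right 0))"

lemma one_sided_dir_diff_affine: "one_sided_dir_diff (\<lambda>x. a \<bullet> x + b)"
  unfolding one_sided_dir_diff_def
proof (intro allI exI)
  fix x d
  have "\<forall>\<^sub>F t in at_right 0. a \<bullet> d = (a \<bullet> (x + t *\<^sub>R d) + b - (a \<bullet> x + b)) / t"
    using eventually_at_right_less[of 0] by eventually_elim (simp add: inner_add_right)
  then show "((\<lambda>t. (a \<bullet> (x + t *\<^sub>R d) + b - (a \<bullet> x + b)) / t) \<longlongrightarrow> a \<bullet> d) (at_right 0)"
    by (rule Lim_transform_eventually[OF tendsto_const])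
qed

lemma tendsto_along_ray:
  fixes f :: "'a::real_normed_vector \<Rightarrow> 'b::topological_space"
  assumes "continuous_on UNIV f"
  shows "((\<lambda>t. f (x + t *\<^sub>R d)) \<longlongrightarrow> f x) (at_right 0)"
proof -
  have "((\<lambda>t::real. x + t *\<^sub>R d) \<longlongrightarrow> x + 0 *\<^sub>R d) (at_right 0)"
    by (intro tendsto_intros)
  then show ?thesis
    using assms by (intro isCont_tendsto_compose[of x f]) (auto simp: continuous_on_eq_continuous_at)
qed

lemma one_sided_dir_diff_max:
  fixes f g :: "'a::real_normed_vector \<Rightarrow> real"
  assumes "continuous_on UNIV f" "continuous_on UNIV g"
    and "one_sided_dir_diff f" "one_sided_dir_diff g"
  shows "one_sided_dir_diff (\<lambda>x. max (f x) (g x))"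
  unfolding one_sided_dir_diff_def
proof (intro allI)
  fix x d :: 'a
  define q where "q h = (\<lambda>t. (h (x + t *\<^sub>R d) - h x) / t)" for h :: "'a \<Rightarrow> real"
  obtain l1 l2 where l1: "(q f \<longlongrightarrow> l1) (at_right 0)" and l2: "(q g \<longlongrightarrow> l2) (at_right 0)"
    using assms(3,4) unfolding one_sided_dir_diff_def q_def by blast
  have gap: "((\<lambda>t. f (x + t *\<^sub>R d) - g (x + t *\<^sub>R d)) \<longlongrightarrow> f x - g x) (at_right 0)"
    by (intro tendsto_diff tendsto_along_ray assms(1,2))
  have "\<exists>l. (q (\<lambda>x. max (f x) (g x)) \<longlongrightarrow> l) (at_right 0)"
  proof (cases "f x > g x \<or> f x < g x")
    case True
    then show ?thesis
    proof
      assume "f x > g x"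
      then have "\<forall>\<^sub>F t in at_right 0. f (x + t *\<^sub>R d) - g (x + t *\<^sub>R d) > 0"
        using order_tendstoD(1)[OF gap, of 0] by simp
      then have "\<forall>\<^sub>F t in at_right 0. q f t = q (\<lambda>x. max (f x) (g x)) t"
        by eventually_elim (use \<open>f x > g x\<close> in \<open>auto simp: q_def\<close>)
      with l1 show ?thesis by (blast intro: Lim_transform_eventually)
    next
      assume "f x < g x"
      then have "\<forall>\<^sub>F t in at_right 0. f (x + t *\<^sub>R d) - g (x + t *\<^sub>R d) < 0"
        using order_tendstoD(2)[OF gap, of 0] by simp
      then have "\<forall>\<^sub>F t in at_right 0. q g t = q (\<lambda>x. max (f x) (g x)) t"
        by eventually_elim (use \<open>f x < g x\<close> in \<open>auto simp: q_def\<close>)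
      with l2 show ?thesis by (blast intro: Lim_transform_eventually)
    qed
  next
    case False
    then have "f x = g x"
      by linarith
    have "\<forall>\<^sub>F t in at_right 0. max (q f t) (q g t) = q (\<lambda>x. max (f x) (g x)) t"
      using eventually_at_right_less[of 0] by eventually_elim
        (simp add: q_def \<open>f x = g x\<close> max_diff_distrib_left max_divide_distrib_right)
    with tendsto_max[OF l1 l2] show ?thesis by (blast intro: Lim_transform_eventually)
  qed
  then show "\<exists>l. ((\<lambda>t. (max (f (x + t *\<^sub>R d)) (g (x + t *\<^sub>R d)) - max (f x) (g x)) / t) \<longlongrightarrow> l) (at_right 0)"
    by (simp add: q_def)
qed

lemma one_sided_dir_diff_uminus:
  assumes "one_sided_dir_diff f"
  shows "one_sided_dir_diff (\<lambda>x. - f x)"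
  unfolding one_sided_dir_diff_def
proof (intro allI)
  fix x d
  obtain l where "((\<lambda>t. (f (x + t *\<^sub>R d) - f x) / t) \<longlongrightarrow> l) (at_right 0)"
    using assms unfolding one_sided_dir_diff_def by blast
  from tendsto_minus[OF this]
  show "\<exists>l. ((\<lambda>t. (- f (x + t *\<^sub>R d) - - f x) / t) \<longlongrightarrow> l) (at_right 0)"
    by (auto simp: minus_divide_left)
qed

lemma one_sided_dir_diff_min:
  fixes f g :: "'a::real_normed_vector \<Rightarrow> real"
  assumes "continuous_on UNIV f" "continuous_on UNIV g"
    and "one_sided_dir_diff f" "one_sided_dir_diff g"
  shows "one_sided_dir_diff (\<lambda>x. min (f x) (g x))"
proof -
  have "one_sided_dir_diff (\<lambda>x. - max (- f x) (- g x))"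
    using assms by (intro one_sided_dir_diff_uminus one_sided_dir_diff_max continuous_intros)
  moreover have "(\<lambda>x. - max (- f x) (- g x)) = (\<lambda>x. min (f x) (g x))"
    by (auto simp: max_def min_def)
  ultimately show ?thesis
    by simp
qed

lemma hadamard_dir_diff_if_lipschitz:
  fixes f :: "'a::euclidean_space \<Rightarrow> real"
  assumes lip: "L-lipschitz_on UNIV f" and "one_sided_dir_diff f"
  shows "hadamard_dir_diff f"
  unfolding hadamard_dir_diff_def
proof (intro allI impI)
  fix x d :: 'a and \<phi> :: "real \<Rightarrow> 'a"
  assume "\<phi> 0 = x" and \<phi>_lim: "((\<lambda>t. (1 / t) *\<^sub>R (\<phi> t - \<phi> 0)) \<longlongrightarrow> d) (at_right 0)"
  obtain l where l: "((\<lambda>t. (f (x + t *\<^sub>R d) - f x) / t) \<longlongrightarrow> l) (at_right 0)"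
    using \<open>one_sided_dir_diff f\<close> unfolding one_sided_dir_diff_def by blast
  have "((\<lambda>t. L * norm ((1 / t) *\<^sub>R (\<phi> t - \<phi> 0) - d)) \<longlongrightarrow> L * norm (d - d)) (at_right 0)"
    by (intro tendsto_intros \<phi>_lim)
  then have error_lim: "((\<lambda>t. L * norm ((1 / t) *\<^sub>R (\<phi> t - \<phi> 0) - d)) \<longlongrightarrow> 0) (at_right 0)"
    by simp
  have "\<forall>\<^sub>F t in at_right 0.
      norm ((f (\<phi> t) - f (x + t *\<^sub>R d)) / t) \<le> L * norm ((1 / t) *\<^sub>R (\<phi> t - \<phi> 0) - d)"
    using eventually_at_right_less[of 0]
  proof eventually_elim
    case (elim t)
    have "\<phi> t - (x + t *\<^sub>R d) = t *\<^sub>R ((1 / t) *\<^sub>R (\<phi> t - \<phi> 0) - d)"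
      using elim \<open>\<phi> 0 = x\<close> by (simp add: algebra_simps)
    then have "\<bar>f (\<phi> t) - f (x + t *\<^sub>R d)\<bar> \<le> t * (L * norm ((1 / t) *\<^sub>R (\<phi> t - \<phi> 0) - d))"
      using lipschitz_onD[OF lip, of "\<phi> t" "x + t *\<^sub>R d"] elim
      by (simp add: dist_norm dist_real_def mult.left_commute)
    then show ?case
      using elim by (simp add: divide_le_eq mult.commute)
  qed
  then have "((\<lambda>t. (f (\<phi> t) - f (x + t *\<^sub>R d)) / t) \<longlongrightarrow> 0) (at_right 0)"
    using error_lim by (rule Lim_null_comparison)
  from tendsto_add[OF l this]
  show "\<exists>l. ((\<lambda>t. (f (\<phi> t) - f x) / t) \<longlongrightarrow> l) (at_right 0)"
    by (auto simp: add_divide_distrib[symmetric])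
qed

definition dip_profile :: "real \<Rightarrow> real \<Rightarrow> real \<Rightarrow> real \<Rightarrow> real" where
  "dip_profile L m r s = max (L * s) (min (- m * s) (m * r - L * (s + r)))"

lemma dip_profile_right:
  assumes "(m - L) * r \<le> 2 * L * s"
  shows "dip_profile L m r s = L * s"
  using assms unfolding dip_profile_def by (simp add: algebra_simps max_def min_def)

lemma dip_profile_middle:
  assumes "m \<le> L" "- r \<le> s" "2 * L * s \<le> (m - L) * r"
  shows "dip_profile L m r s = m * r - L * (s + r)"
proof -
  have "0 \<le> (L - m) * (s + r)"
    using assms by simp
  then show ?thesis
    using assms unfolding dip_profile_def by (simp add: algebra_simps max_def min_def)
qed

lemma dip_profile_left:
  assumes "0 \<le> m" "m \<le> L" "0 \<le> r" "s \<le> - r"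
  shows "dip_profile L m r s = - m * s"
proof -
  have "(L - m) * (s + r) \<le> 0" "(L + m) * s \<le> 0"
    using assms by (simp_all add: mult_nonneg_nonpos)
  then show ?thesis
    unfolding dip_profile_def by (simp add: algebra_simps max_def min_def)
qed

lemma dip_profile_zero:
  assumes "m \<le> L" "0 \<le> r"
  shows "dip_profile L m r 0 = 0"
  using assms mult_right_mono[OF assms] unfolding dip_profile_def by simp

lemma dip_profile_ge:
  assumes "0 \<le> m" "m \<le> L" "0 \<le> r"
  shows "(m - L) * r / 2 \<le> dip_profile L m r s"
proof (cases "(m - L) * r / 2 \<le> L * s")
  case True
  then show ?thesis
    unfolding dip_profile_def by (simp add: le_max_iff_disj)
next
  case False
  have "(m - L) * r \<le> 0"
    using assms by (simp add: mult_nonpos_nonneg)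
  with False have "L * s < 0"
    by linarith
  with assms have "0 \<le> - m * s"
    by (simp add: mult_less_0_iff mult_nonneg_nonpos)
  moreover have "(m - L) * r / 2 \<le> m * r - L * (s + r)"
    using False by (simp add: field_simps)
  ultimately show ?thesis
    using \<open>(m - L) * r \<le> 0\<close> unfolding dip_profile_def by (simp add: le_max_iff_disj)
qed

lemma abs_max_diff_le: "\<bar>a - c\<bar> \<le> k \<Longrightarrow> \<bar>b - d\<bar> \<le> k \<Longrightarrow> \<bar>max a b - max c d\<bar> \<le> (k::real)"
  by (simp add: max_def abs_le_iff)

lemma abs_min_diff_le: "\<bar>a - c\<bar> \<le> k \<Longrightarrow> \<bar>b - d\<bar> \<le> k \<Longrightarrow> \<bar>min a b - min c d\<bar> \<le> (k::real)"
  by (simp add: min_def abs_le_iff)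

lemma dip_profile_lipschitz:
  assumes "0 \<le> m" "m \<le> L"
  shows "\<bar>dip_profile L m r s - dip_profile L m r s'\<bar> \<le> L * \<bar>s - s'\<bar>"
proof -
  have slope: "\<bar>c * s - c * s'\<bar> \<le> L * \<bar>s - s'\<bar>" if "\<bar>c\<bar> \<le> L" for c
    using that by (simp add: abs_mult mult_right_mono flip: right_diff_distrib)
  have right: "\<bar>L * s - L * s'\<bar> \<le> L * \<bar>s - s'\<bar>"
    using assms by (intro slope) simp
  have left: "\<bar>- m * s - - m * s'\<bar> \<le> L * \<bar>s - s'\<bar>"
    using assms by (intro slope) simp
  have "\<bar>(m * r - L * (s + r)) - (m * r - L * (s' + r))\<bar> = \<bar>L * s - L * s'\<bar>"
    by (simp add: algebra_simps)
  with right have middle: "\<bar>(m * r - L * (s + r)) - (m * r - L * (s' + r))\<bar> \<le> L * \<bar>s - s'\<bar>"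
    by simp
  show ?thesis
    unfolding dip_profile_def by (intro abs_max_diff_le abs_min_diff_le right left middle)
qed

locale dip_ridge =
  fixes e :: "'a::euclidean_space" and p L m r :: real
  assumes norm_e: "norm e = 1" and m_pos: "0 < m" and m_less: "m < L" and r_pos: "0 < r"
begin

definition ridge :: "'a \<Rightarrow> real" where
  "ridge x = dip_profile L m r (e \<bullet> x - p)"

definition kink :: real where
  "kink = p + (m - L) * r / (2 * L)"

lemma L_pos: "0 < L"
  using m_pos m_less by simp

lemma e_nonzero: "e \<noteq> 0"
  using norm_e by auto

lemma kink_less: "kink < p"
proof -
  have "(m - L) * r < 0"
    using m_less r_pos by (simp add: mult_neg_pos)
  then show ?thesis
    unfolding kink_def using L_pos by (simp add: divide_less_0_iff)
qed

lemma ridge_right: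
  assumes "kink \<le> e \<bullet> x"
  shows "ridge x = (L *\<^sub>R e) \<bullet> x - L * p"
proof -
  have "(m - L) * r / (2 * L) \<le> e \<bullet> x - p"
    using assms unfolding kink_def by simp
  then have "(m - L) * r \<le> 2 * L * (e \<bullet> x - p)"
    using L_pos by (simp add: pos_divide_le_eq mult.commute)
  then show ?thesis
    unfolding ridge_def by (simp add: dip_profile_right algebra_simps)
qed

lemma ridge_middle:
  assumes "p - r \<le> e \<bullet> x" "e \<bullet> x \<le> kink"
  shows "ridge x = ((- L) *\<^sub>R e) \<bullet> x + (m * r - L * r + L * p)"
proof -
  have "e \<bullet> x - p \<le> (m - L) * r / (2 * L)"
    using assms unfolding kink_def by simp
  then have "2 * L * (e \<bullet> x - p) \<le> (m - L) * r"
    using L_pos by (simp add: pos_le_divide_eq mult.commute)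
  then show ?thesis
    using assms m_less unfolding ridge_def by (simp add: dip_profile_middle algebra_simps)
qed

lemma ridge_left:
  assumes "e \<bullet> x \<le> p - r"
  shows "ridge x = ((- m) *\<^sub>R e) \<bullet> x + m * p"
  using assms m_pos m_less r_pos unfolding ridge_def by (simp add: dip_profile_left algebra_simps)

lemma ridge_max_min_affine:
  "ridge = (\<lambda>x. max ((L *\<^sub>R e) \<bullet> x + - L * p)
     (min (((- m) *\<^sub>R e) \<bullet> x + m * p) (((- L) *\<^sub>R e) \<bullet> x + (m * r - L * r + L * p))))"
  by (rule ext) (simp add: ridge_def dip_profile_def algebra_simps)

lemma ridge_lipschitz: "L-lipschitz_on UNIV ridge"
proof (rule lipschitz_onI)
  fix x y :: 'a
  have "\<bar>ridge x - ridge y\<bar> \<le> L * \<bar>(e \<bullet> x - p) - (e \<bullet> y - p)\<bar>"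
    unfolding ridge_def using m_pos m_less by (intro dip_profile_lipschitz) auto
  also have "\<dots> = L * \<bar>e \<bullet> (x - y)\<bar>"
    by (simp add: inner_diff_right)
  also have "\<dots> \<le> L * dist x y"
    using Cauchy_Schwarz_ineq2[of e "x - y"] L_pos norm_e by (simp add: dist_norm)
  finally show "dist (ridge x) (ridge y) \<le> L * dist x y"
    by (simp add: dist_real_def)
qed (use L_pos in simp)

lemma ridge_hadamard_dir_diff: "hadamard_dir_diff ridge"
proof (rule hadamard_dir_diff_if_lipschitz[OF ridge_lipschitz])
  show "one_sided_dir_diff ridge"
    unfolding ridge_max_min_affine
    by (intro one_sided_dir_diff_max one_sided_dir_diff_min one_sided_dir_diff_affine
        continuous_on_min continuous_on_add continuous_on_inner continuous_on_id continuous_on_const)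
qed

lemma ridge_in_fclass:
  assumes "p = e \<bullet> x0" "(L - m) * r \<le> 2 * \<Delta>"
  shows "ridge \<in> fclass x0 \<Delta> L"
proof -
  have "ridge x0 - ridge x \<le> \<Delta>" for x
    using dip_profile_zero[of m L r] dip_profile_ge[of m L r "e \<bullet> x - p"] assms m_pos m_less r_pos
    unfolding ridge_def by (simp add: algebra_simps)
  then show ?thesis
    unfolding fclass_def using ridge_lipschitz ridge_hadamard_dir_diff by blast
qed

lemma clarke_subdiff_ridge_right:
  assumes "kink < e \<bullet> x"
  shows "clarke_subdiff ridge x = {L *\<^sub>R e}"
  using assms by (intro clarke_subdiff_eq_of_affine_on_open[OF open_halfspace_gt])
    (auto simp: ridge_right)

lemma clarke_subdiff_ridge_left:
  assumes "e \<bullet> x < p - r"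
  shows "clarke_subdiff ridge x = {(- m) *\<^sub>R e}"
  using assms by (intro clarke_subdiff_eq_of_affine_on_open[OF open_halfspace_lt]) (auto simp: ridge_left)

lemma clarke_subdiff_ridge_nonempty: "clarke_subdiff ridge x \<noteq> {}"
proof -
  consider "kink \<le> e \<bullet> x" | "p - r < e \<bullet> x" "e \<bullet> x < kink" | "e \<bullet> x \<le> p - r"
    by linarith
  then show ?thesis
  proof cases
    case 1
    then have "L *\<^sub>R e \<in> clarke_subdiff ridge x"
      using e_nonzero
      by (intro clarke_subdiff_mem_of_affine_on_open[OF open_halfspace_gt[of kink e], where b = "- L * p"])
        (auto simp: ridge_right)
    then show ?thesis by blast
  next
    case 2
    let ?S = "{y. p - r < e \<bullet> y} \<inter> {y. e \<bullet> y < kink}"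
    have "open ?S"
      by (intro open_Int open_halfspace_gt open_halfspace_lt)
    moreover have "x \<in> closure ?S"
      using 2 by (intro subsetD[OF closure_subset]) simp
    ultimately have "(- L) *\<^sub>R e \<in> clarke_subdiff ridge x"
      by (rule clarke_subdiff_mem_of_affine_on_open) (auto simp: ridge_middle)
    then show ?thesis by blast
  next
    case 3
    then have "(- m) *\<^sub>R e \<in> clarke_subdiff ridge x"
      using e_nonzero
      by (intro clarke_subdiff_mem_of_affine_on_open[OF open_halfspace_lt[of e "p - r"], where b = "m * p"])
        (auto simp: ridge_left)
    then show ?thesis by blast
  qed
qed

lemma ridge_outside_notch:
  assumes "0 \<le> e \<bullet> x - p \<or> e \<bullet> x - p < - r"
  shows "ridge x = (if 0 \<le> e \<bullet> x - p then L else - m) * (e \<bullet> x - p)"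
    and "clarke_subdiff ridge x = {(if 0 \<le> e \<bullet> x - p then L else - m) *\<^sub>R e}"
proof -
  have right: "kink < e \<bullet> x" if "0 \<le> e \<bullet> x - p"
    using that kink_less by simp
  have left: "e \<bullet> x < p - r" if "\<not> 0 \<le> e \<bullet> x - p"
    using that assms by simp
  show "ridge x = (if 0 \<le> e \<bullet> x - p then L else - m) * (e \<bullet> x - p)"
    using right left
    by (cases "0 \<le> e \<bullet> x - p") (simp_all add: ridge_right ridge_left algebra_simps)
  show "clarke_subdiff ridge x = {(if 0 \<le> e \<bullet> x - p then L else - m) *\<^sub>R e}"
    using right left
    by (cases "0 \<le> e \<bullet> x - p") (simp_all add: clarke_subdiff_ridge_right clarke_subdiff_ridge_left)
qed

lemma ridge_not_eps_stationary_outside_notch: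
  assumes "\<epsilon> < m" and "0 \<le> e \<bullet> x - p \<or> e \<bullet> x - p < - r"
  shows "\<not> eps_stationary ridge \<epsilon> x"
  using ridge_outside_notch(2)[OF assms(2)] assms(1) m_less norm_e
  unfolding eps_stationary_def by auto

end

lemma history_eq_if_oracles_agree:
  assumes "\<forall>t<T. query alg F G t \<in> U" and "\<forall>x\<in>U. f x = F x \<and> g x = G x" and "t \<le> T"
  shows "history alg f g t = history alg F G t"
  using assms(3)
proof (induction t)
  case (Suc t)
  then have "alg t (history alg F G t) \<in> U"
    using assms(1) unfolding query_def by simp
  with Suc assms(2) show ?case
    by (simp add: Let_def)
qed simp

lemma query_eq_if_oracles_agree:
  assumes "\<forall>t<T. query alg F G t \<in> U" and "\<forall>x\<in>U. f x = F x \<and> g x = G x" and "t < T"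
  shows "query alg f g t = query alg F G t"
  using history_eq_if_oracles_agree[OF assms(1,2), of t] assms(3) unfolding query_def by simp

lemma finite_instances_hit:
  fixes f :: "nat \<Rightarrow> 'a \<Rightarrow> real" and g :: "nat \<Rightarrow> 'a \<Rightarrow> 'a"
  assumes agree: "\<And>n x. x \<notin> N n \<Longrightarrow> f n x = F x \<and> g n x = G x \<and> \<not> P n x"
    and finite_N: "\<And>x. finite {n. x \<in> N n}"
  shows "finite {n. \<exists>t<T. P n (query alg (f n) (g n) t)}"
proof (rule finite_subset)
  show "{n. \<exists>t<T. P n (query alg (f n) (g n) t)} \<subseteq> (\<Union>t<T. {n. query alg F G t \<in> N n})"
  proof (intro subsetI, rule ccontr)
    fix n
    assume "n \<in> {n. \<exists>t<T. P n (query alg (f n) (g n) t)}"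
    then obtain t where "t < T" and hit: "P n (query alg (f n) (g n) t)"
      by blast
    assume "n \<notin> (\<Union>t<T. {n. query alg F G t \<in> N n})"
    then have outside: "\<forall>t<T. query alg F G t \<in> - N n"
      by blast
    then have "query alg (f n) (g n) t = query alg F G t"
      using agree \<open>t < T\<close> by (intro query_eq_if_oracles_agree[OF outside]) auto
    moreover have "query alg F G t \<notin> N n"
      using outside \<open>t < T\<close> by blast
    ultimately show False
      using hit agree by metis
  qed
  show "finite (\<Union>t<T. {n. query alg F G t \<in> N n})"
    using finite_N by blast
qed

lemma finite_shrinking_notches:
  fixes r :: "nat \<Rightarrow> real"
  assumes "r \<longlonglongrightarrow> 0"
  shows "finite {n. - r n \<le> s \<and> s < 0}"
proof (cases "s < 0")
  case True
  then have "\<forall>\<^sub>F n in cofinite. r n < - s"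
    using order_tendstoD(2)[OF assms, of "- s"] by (simp add: cofinite_eq_sequentially)
  then show ?thesis
    unfolding eventually_cofinite by (rule finite_subset[rotated]) auto
qed simp

lemma (in finite_measure) measure_tendsto_0_if_finitely_often:
  assumes "\<And>n. E n \<in> sets M" and finitely_often: "\<And>\<omega>. finite {n. \<omega> \<in> E n}"
  shows "(\<lambda>n. measure M (E n)) \<longlonglongrightarrow> 0"
proof -
  define B where "B k = (\<Union>n\<in>{k..}. E n)" for k
  have B_sets: "range B \<subseteq> sets M"
    unfolding B_def using assms(1) by auto
  have "decseq B"
    unfolding B_def decseq_def by (intro allI impI UN_mono) auto
  moreover have "(\<Inter>k. B k) = {}"
  proof safe
    fix \<omega> assume "\<omega> \<in> (\<Inter>k. B k)"
    obtain k where k: "{n. \<omega> \<in> E n} \<subseteq> {..<k}"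
      using finite_nat_bounded[OF finitely_often] by blast
    from \<open>\<omega> \<in> (\<Inter>k. B k)\<close> obtain n where "k \<le> n" "\<omega> \<in> E n"
      unfolding B_def by blast
    with k show "\<omega> \<in> {}"
      by auto
  qed
  ultimately have B_lim: "(\<lambda>k. measure M (B k)) \<longlonglongrightarrow> 0"
    using Lim_measure_decseq[OF B_sets] by simp
  have E_le_B: "\<forall>\<^sub>F k in sequentially. measure M (E k) \<le> measure M (B k)"
    using B_sets by (intro always_eventually allI finite_measure_mono) (auto simp: B_def)
  have "\<forall>\<^sub>F k in sequentially. 0 \<le> measure M (E k)"
    by simp
  from tendsto_sandwich[OF this E_le_B tendsto_const B_lim] show ?thesis .
qed

lemma (in finite_measure) measure_instances_hit_tendsto_0:
  fixes alg :: "'a \<Rightarrow> nat \<Rightarrow> ('b \<times> real \<times> 'b) list \<Rightarrow> 'b"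
  assumes "\<And>n. {\<omega> \<in> space M. \<exists>t<T. P n (query (alg \<omega>) (f n) (g n) t)} \<in> sets M"
    and agree: "\<And>n x. x \<notin> N n \<Longrightarrow> f n x = F x \<and> g n x = G x \<and> \<not> P n x"
    and finite_N: "\<And>x. finite {n. x \<in> N n}"
  shows "(\<lambda>n. measure M {\<omega> \<in> space M. \<exists>t<T. P n (query (alg \<omega>) (f n) (g n) t)}) \<longlonglongrightarrow> 0"
proof (rule measure_tendsto_0_if_finitely_often)
  fix \<omega>
  have "finite {n. \<exists>t<T. P n (query (alg \<omega>) (f n) (g n) t)}"
    using agree finite_N by (rule finite_instances_hit)
  then show "finite {n. \<omega> \<in> {\<omega> \<in> space M. \<exists>t<T. P n (query (alg \<omega>) (f n) (g n) t)}}"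
    by (rule finite_subset[rotated]) auto
qed fact

lemma notched_ridge_family:
  fixes x\<^sub>0 :: "'a::euclidean_space"
  assumes "0 < \<Delta>" "0 \<le> \<epsilon>" "\<epsilon> < L"
  obtains f :: "nat \<Rightarrow> 'a \<Rightarrow> real" and g :: "nat \<Rightarrow> 'a \<Rightarrow> 'a"
    and N :: "nat \<Rightarrow> 'a set" and F :: "'a \<Rightarrow> real" and G :: "'a \<Rightarrow> 'a"
  where "\<And>n. f n \<in> fclass x\<^sub>0 \<Delta> L" and "\<And>n x. g n x \<in> clarke_subdiff (f n) x"
    and "\<And>n x. x \<notin> N n \<Longrightarrow> f n x = F x \<and> g n x = G x \<and> \<not> eps_stationary (f n) \<epsilon> x"
    and "\<And>x. finite {n. x \<in> N n}"
proof -
  obtain e :: 'a where "norm e = 1"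
    using nonempty_Basis norm_Basis by blast
  define p where "p = e \<bullet> x\<^sub>0"
  define m where "m = (L + \<epsilon>) / 2"
  define r where "r n = \<Delta> / L / real (Suc n)" for n
  have m: "0 < m" "m < L" "\<epsilon> < m"
    using assms unfolding m_def by auto
  have r: "0 < r n" "(L - m) * r n \<le> 2 * \<Delta>" for n
  proof -
    show "0 < r n"
      using assms m unfolding r_def by simp
    have "L * r n = \<Delta> / real (Suc n)"
      using m unfolding r_def by simp
    also have "\<dots> \<le> \<Delta>"
      using assms(1) by (simp add: divide_le_eq)
    finally show "(L - m) * r n \<le> 2 * \<Delta>"
      using mult_pos_pos[OF m(1) \<open>0 < r n\<close>] assms(1) by (simp add: left_diff_distrib)
  qed
  define f where "f n = dip_ridge.ridge e p L m (r n)" for n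
  \<comment> \<open>outside the notch the generalized gradient is a singleton, so this choice is forced there\<close>
  define g where "g n x = (SOME v. v \<in> clarke_subdiff (f n) x)" for n x
  define F where "F x = (if 0 \<le> e \<bullet> x - p then L else - m) * (e \<bullet> x - p)" for x
  define G where "G x = (if 0 \<le> e \<bullet> x - p then L else - m) *\<^sub>R e" for x
  define N where "N n = {x. - r n \<le> e \<bullet> x - p \<and> e \<bullet> x - p < 0}" for n
  show thesis
  proof (rule that)
    fix n
    interpret dip_ridge e p L m "r n"
      using \<open>norm e = 1\<close> m r by unfold_locales auto
    show "f n \<in> fclass x\<^sub>0 \<Delta> L"
      unfolding f_def using p_def r(2) by (rule ridge_in_fclass)
    show "g n x \<in> clarke_subdiff (f n) x" for x
      unfolding g_def f_def using clarke_subdiff_ridge_nonempty by (simp add: some_in_eq)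
    fix x
    assume "x \<notin> N n"
    then have "0 \<le> e \<bullet> x - p \<or> e \<bullet> x - p < - r n"
      unfolding N_def by auto
    then show "f n x = F x \<and> g n x = G x \<and> \<not> eps_stationary (f n) \<epsilon> x"
      unfolding f_def g_def F_def G_def
      using ridge_outside_notch ridge_not_eps_stationary_outside_notch[OF m(3)] by simp
  next
    have "r \<longlonglongrightarrow> 0"
      unfolding r_def by (rule LIMSEQ_Suc[OF lim_const_over_n])
    then show "finite {n. x \<in> N n}" for x
      unfolding N_def mem_Collect_eq by (rule finite_shrinking_notches)
  qed
qed

theorem theorem1:
  fixes M :: "'s measure"
    and alg :: "'s \<Rightarrow> nat \<Rightarrow> ('a::euclidean_space \<times> real \<times> 'a) list \<Rightarrow> 'a"
    and x0 :: 'a and \<Delta> L \<epsilon> :: real and T :: nat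
  assumes "\<Delta> > 0" and "L > 0" and "0 \<le> \<epsilon>" and "\<epsilon> < L"
    and "prob_space M"
    and meas: "\<And>f g. f \<in> fclass x0 \<Delta> L \<Longrightarrow> (\<forall>x. g x \<in> clarke_subdiff f x) \<Longrightarrow>
            {\<omega> \<in> space M. \<exists>t<T. eps_stationary f \<epsilon> (query (alg \<omega>) f g t)} \<in> sets M"
  shows "\<exists>f \<in> fclass x0 \<Delta> L. \<exists>g. (\<forall>x. g x \<in> clarke_subdiff f x) \<and>
           measure M {\<omega> \<in> space M. \<exists>t<T. eps_stationary f \<epsilon> (query (alg \<omega>) f g t)} \<le> 1 / 2"
proof -
  interpret prob_space M
    by fact
  obtain f :: "nat \<Rightarrow> 'a \<Rightarrow> real" and g :: "nat \<Rightarrow> 'a \<Rightarrow> 'a" and N :: "nat \<Rightarrow> 'a set"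
    and F G where in_fclass: "\<And>n. f n \<in> fclass x0 \<Delta> L"
    and subgradient: "\<And>n x. g n x \<in> clarke_subdiff (f n) x"
    and agree: "\<And>n x. x \<notin> N n \<Longrightarrow> f n x = F x \<and> g n x = G x \<and> \<not> eps_stationary (f n) \<epsilon> x"
    and finite_N: "\<And>x. finite {n. x \<in> N n}"
    using notched_ridge_family[OF assms(1,3,4), where x\<^sub>0 = x0] by blast
  let ?E = "\<lambda>n. {\<omega> \<in> space M. \<exists>t<T. eps_stationary (f n) \<epsilon> (query (alg \<omega>) (f n) (g n) t)}"
  have "?E n \<in> sets M" for n
    using meas in_fclass subgradient by blast
  then have "(\<lambda>n. measure M (?E n)) \<longlonglongrightarrow> 0"
    using agree finite_N by (rule measure_instances_hit_tendsto_0)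
  then have "\<forall>\<^sub>F n in sequentially. measure M (?E n) < 1 / 2"
    by (rule order_tendstoD) simp
  then obtain n where "measure M (?E n) \<le> 1 / 2"
    unfolding eventually_sequentially by (meson less_imp_le order_refl)
  then show ?thesis
    using in_fclass subgradient by blast
qed

end
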